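(* Let $G$ be a finite group such that either $G$ cannot be generated by two elements, or $G$ has trivial center. Then the difference graph $\mathcal{D}(G)$ is null (has no edges) if and only if $\mathcal{D}(H)$ is null for every proper subgroup $H$ of $G$.
   Context: For a finite group $G$ with identity $e$: the intersection power graph $\mathcal{G}_I(G)$ has vertex set $G$, two distinct non-identity vertices $x,y$ being adjacent iff $\langle x\rangle\cap\langle y\rangle\neq\{e\}$, and $e$ being adjacent to every other vertex. The power graph $\mathcal{P}(G)$ has vertex set $G$, two distinct vertices being adjacent iff one is a power of the other. The undeleted difference graph of $G$ has vertex set $G$ and edge set $E(\mathcal{G}_I(G))\setminus E(\mathcal{P}(G))$; the difference graph $\mathcal{D}(G)$ is obtained from it by deleting all isolated vertices. $\mathcal{D}(G)$ is null iff it has no edges, i.e. iff $\mathcal{G}_I(G)=\mathcal{P}(G)$. *)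

theory Defs
  imports "HOL-Algebra.Algebra"
begin

definition group_center :: "('a, 'b) monoid_scheme \<Rightarrow> 'a set" where
  "group_center G = {z \<in> carrier G. \<forall>g \<in> carrier G. z \<otimes>\<^bsub>G\<^esub> g = g \<otimes>\<^bsub>G\<^esub> z}"

definition ipg_edge :: "('a, 'b) monoid_scheme \<Rightarrow> 'a \<Rightarrow> 'a \<Rightarrow> bool" where
  "ipg_edge G x y \<longleftrightarrow> x \<in> carrier G \<and> y \<in> carrier G \<and> x \<noteq> y \<and>
     (x = \<one>\<^bsub>G\<^esub> \<or> y = \<one>\<^bsub>G\<^esub> \<or>
      generate G {x} \<inter> generate G {y} \<noteq> {\<one>\<^bsub>G\<^esub>})"

definition pg_edge :: "('a, 'b) monoid_scheme \<Rightarrow> 'a \<Rightarrow> 'a \<Rightarrow> bool" where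
  "pg_edge G x y \<longleftrightarrow> x \<in> carrier G \<and> y \<in> carrier G \<and> x \<noteq> y \<and>
     ((\<exists>n::nat. y = x [^]\<^bsub>G\<^esub> n) \<or> (\<exists>n::nat. x = y [^]\<^bsub>G\<^esub> n))"

text \<open>Edge of the (undeleted) difference graph. Deleting isolated vertices does not
  change the edge set, so D(G) is null iff there is no such edge.\<close>
definition diff_edge :: "('a, 'b) monoid_scheme \<Rightarrow> 'a \<Rightarrow> 'a \<Rightarrow> bool" where
  "diff_edge G x y \<longleftrightarrow> ipg_edge G x y \<and> \<not> pg_edge G x y"

definition diff_graph_null :: "('a, 'b) monoid_scheme \<Rightarrow> bool" where
  "diff_graph_null G \<longleftrightarrow> (\<forall>x y. \<not> diff_edge G x y)"

end

theory Submission
  imports Defs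
begin

text \<open>An edge x -- y of the difference graph has x, y \<noteq> e, so the cyclic subgroups
  generated by x and y share some z \<noteq> e. The edge survives in the subgroup generated by
  x and y; if every proper subgroup has a null difference graph, that subgroup is G itself.
  Then G is 2-generated, hence has trivial center by hypothesis, yet z commutes with both
  generators x and y and so is central.\<close>

definition centralizer :: "('a, 'b) monoid_scheme \<Rightarrow> 'a \<Rightarrow> 'a set" where
  "centralizer G w = {g \<in> carrier G. g \<otimes>\<^bsub>G\<^esub> w = w \<otimes>\<^bsub>G\<^esub> g}"

context group
begin

lemma subgroup_centralizer:
  assumes w: "w \<in> carrier G"
  shows "subgroup (centralizer G w) G"
proof (rule subgroupI)
  show "centralizer G w \<subseteq> carrier G"
    unfolding centralizer_def by blast
  show "centralizer G w \<noteq> {}"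
    using w unfolding centralizer_def by (auto intro!: exI[of _ \<one>])
next
  fix a assume "a \<in> centralizer G w"
  then have a: "a \<in> carrier G" and aw: "a \<otimes> w = w \<otimes> a"
    unfolding centralizer_def by auto
  have "inv a \<otimes> w = inv a \<otimes> (w \<otimes> a) \<otimes> inv a"
    using a w by (simp add: m_assoc)
  also have "\<dots> = w \<otimes> inv a"
    using a w by (simp flip: aw add: m_assoc[symmetric])
  finally show "inv a \<in> centralizer G w"
    using a unfolding centralizer_def by simp
next
  fix a b assume "a \<in> centralizer G w" "b \<in> centralizer G w"
  then show "a \<otimes> b \<in> centralizer G w"
    using w unfolding centralizer_def by (auto simp: m_assoc) (metis m_assoc)
qed

lemma generate_subset_centralizer:
  assumes "w \<in> carrier G" "S \<subseteq> centralizer G w"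
  shows "generate G S \<subseteq> centralizer G w"
  using generate_subgroup_incl[OF assms(2) subgroup_centralizer[OF assms(1)]] .

lemma generate_singleton_subset_centralizer:
  assumes "x \<in> carrier G"
  shows "generate G {x} \<subseteq> centralizer G x"
  using assms by (intro generate_subset_centralizer) (auto simp: centralizer_def)

lemma centralizer_generators_in_center:
  assumes "generate G S = carrier G" "z \<in> carrier G" "S \<subseteq> centralizer G z"
  shows "z \<in> group_center G"
  using generate_subset_centralizer[OF assms(2,3)] assms(1,2)
  unfolding centralizer_def group_center_def by auto

lemma common_power_in_center:
  assumes gen: "generate G {x, y} = carrier G"
    and zx: "z \<in> generate G {x}" and zy: "z \<in> generate G {y}"
  shows "z \<in> group_center G"
proof (rule centralizer_generators_in_center[OF gen])
  have xy: "x \<in> carrier G" "y \<in> carrier G"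
    using gen generate.incl[of _ "{x, y}" G] by auto
  show z: "z \<in> carrier G"
    using zx generate_incl[of "{x}"] xy by blast
  have "z \<in> centralizer G x" "z \<in> centralizer G y"
    using zx zy generate_singleton_subset_centralizer xy by blast+
  then show "{x, y} \<subseteq> centralizer G z"
    using xy z unfolding centralizer_def by auto
qed

lemma diff_edge_common_power:
  assumes "diff_edge G x y"
  obtains z where "z \<in> generate G {x}" "z \<in> generate G {y}" "z \<noteq> \<one>"
proof -
  have "x \<noteq> \<one> \<and> y \<noteq> \<one>"
    using assms nat_pow_0[of x] nat_pow_0[of y]
    unfolding diff_edge_def ipg_edge_def pg_edge_def by metis
  then have "generate G {x} \<inter> generate G {y} \<noteq> {\<one>}"
    using assms unfolding diff_edge_def ipg_edge_def by blast
  moreover have "\<one> \<in> generate G {x} \<inter> generate G {y}"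
    using generate.one by blast
  ultimately show thesis
    using that by blast
qed

lemma diff_edge_subgroup_iff:
  assumes "subgroup H G"
  shows "diff_edge (G\<lparr>carrier := H\<rparr>) x y \<longleftrightarrow> x \<in> H \<and> y \<in> H \<and> diff_edge G x y"
proof -
  have "a [^]\<^bsub>G\<lparr>carrier := H\<rparr>\<^esub> n = a [^] n" for a and n :: nat
    by (simp add: nat_pow_def)
  moreover have "generate (G\<lparr>carrier := H\<rparr>) {a} = generate G {a}" if "a \<in> H" for a
    using generate_consistent[OF _ assms] that by simp
  ultimately show ?thesis
    using subgroup.subset[OF assms]
    unfolding diff_edge_def ipg_edge_def pg_edge_def by auto
qed

lemma diff_graph_null_subgroup:
  assumes "diff_graph_null G" "subgroup H G"
  shows "diff_graph_null (G\<lparr>carrier := H\<rparr>)"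
  using assms diff_edge_subgroup_iff unfolding diff_graph_null_def by blast

lemma diff_edge_generates:
  assumes edge: "diff_edge G x y"
    and proper_null: "\<And>H. subgroup H G \<Longrightarrow> H \<noteq> carrier G \<Longrightarrow> diff_graph_null (G\<lparr>carrier := H\<rparr>)"
  shows "generate G {x, y} = carrier G"
proof (rule ccontr)
  have "{x, y} \<subseteq> carrier G"
    using edge unfolding diff_edge_def ipg_edge_def by auto
  then have sub: "subgroup (generate G {x, y}) G"
    by (rule generate_is_subgroup)
  moreover have "x \<in> generate G {x, y}" "y \<in> generate G {x, y}"
    by (auto intro: generate.incl)
  ultimately have "diff_edge (G\<lparr>carrier := generate G {x, y}\<rparr>) x y"
    using diff_edge_subgroup_iff edge by blast
  moreover assume "generate G {x, y} \<noteq> carrier G"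
  ultimately show False
    using proper_null[OF sub] unfolding diff_graph_null_def by blast
qed

end

theorem theorem2p2:
  fixes G :: "('a, 'b) monoid_scheme"
  assumes "group G" and "finite (carrier G)"
    and "(\<not> (\<exists>a \<in> carrier G. \<exists>b \<in> carrier G. generate G {a, b} = carrier G))
         \<or> group_center G = {\<one>\<^bsub>G\<^esub>}"
  shows "diff_graph_null G \<longleftrightarrow>
    (\<forall>H. subgroup H G \<and> H \<noteq> carrier G \<longrightarrow> diff_graph_null (G\<lparr>carrier := H\<rparr>))"
proof
  interpret group G by fact
  show "diff_graph_null G \<Longrightarrow> \<forall>H. subgroup H G \<and> H \<noteq> carrier G \<longrightarrow> diff_graph_null (G\<lparr>carrier := H\<rparr>)"
    using diff_graph_null_subgroup by blast
  assume proper_null: "\<forall>H. subgroup H G \<and> H \<noteq> carrier G \<longrightarrow> diff_graph_null (G\<lparr>carrier := H\<rparr>)"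
  show "diff_graph_null G"
    unfolding diff_graph_null_def
  proof (intro allI notI)
    fix x y assume edge: "diff_edge G x y"
    then have gen: "generate G {x, y} = carrier G"
      using diff_edge_generates proper_null by blast
    moreover have "x \<in> carrier G" "y \<in> carrier G"
      using edge unfolding diff_edge_def ipg_edge_def by auto
    ultimately have trivial_center: "group_center G = {\<one>\<^bsub>G\<^esub>}"
      using assms(3) by blast
    obtain z where "z \<in> generate G {x}" "z \<in> generate G {y}" "z \<noteq> \<one>\<^bsub>G\<^esub>"
      using diff_edge_common_power[OF edge] .
    then show False
      using common_power_in_center[OF gen] trivial_center by blast
  qed
qed

end
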